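(* Let $F_k$ denote the Fibonacci numbers ($F_0=0$, $F_1=1$, $F_{k+2}=F_k+F_{k+1}$). For all integers $i,j$ for which all indices below are nonnegative, $\gcd(F_{i-1}+F_{j+1},\,F_i-F_j)=\gcd(F_{i-3}+F_{j+3},\,F_{i-2}-F_{j+2})$. *)

theory Defs
  imports "HOL-Number_Theory.Fib"
begin

end

theory Submission
  imports Defs
begin

(* With A = F(i-1) + F(j+1) and B = F(i) - F(j), the Fibonacci recurrence gives
   F(i-3) + F(j+3) = 2A - B and F(i-2) - F(j+2) = B - A.  The substitution
   (A, B) \<mapsto> (2A - B, B - A) has determinant 1, so it preserves the gcd. *)

lemma gcd_double_diff_diff: "gcd (2 * a - b) (b - a) = gcd a (b :: 'a :: ring_gcd)"
proof -
  have "gcd (2 * a - b) (b - a) = gcd (a - (b - a)) (b - a)"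
    by (simp add: algebra_simps mult_2)
  also have "\<dots> = gcd a (b - a)"
    by (rule gcd_diff1)
  also have "\<dots> = gcd (b - a) a"
    by (rule gcd.commute)
  also have "\<dots> = gcd b a"
    by (rule gcd_diff1)
  finally show ?thesis
    by (simp add: gcd.commute)
qed

theorem lemma2p3p1:
  fixes i j :: nat
  assumes "i \<ge> 3"
  shows "gcd (int (fib (i - 1)) + int (fib (j + 1))) (int (fib i) - int (fib j))
       = gcd (int (fib (i - 3)) + int (fib (j + 3))) (int (fib (i - 2)) - int (fib (j + 2)))"
proof -
  obtain n where i: "i = n + 3"
    using assms by (metis add.commute le_add_diff_inverse)
  define A where "A = int (fib (n + 2)) + int (fib (j + 1))"
  define B where "B = int (fib (n + 3)) - int (fib j)"
  have fib_plus_3: "fib (k + 3) = fib (k + 1) + fib (k + 2)" for k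
    by (simp add: numeral_3_eq_3 numeral_2_eq_2)
  have rhs1: "int (fib n) + int (fib (j + 3)) = 2 * A - B"
    using fib_plus_2[of n] fib_plus_2[of j] fib_plus_3[of n] fib_plus_3[of j]
    by (simp add: A_def B_def)
  have rhs2: "int (fib (n + 1)) - int (fib (j + 2)) = B - A"
    using fib_plus_2[of n] fib_plus_2[of j] fib_plus_3[of n]
    by (simp add: A_def B_def)
  have shifts: "i - 1 = n + 2" "i - 2 = n + 1" "i - 3 = n"
    using i by simp_all
  show ?thesis
    unfolding shifts unfolding i A_def [symmetric] B_def [symmetric] rhs1 rhs2
    by (rule gcd_double_diff_diff [symmetric])
qed

end
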